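(* For integers $m\ge 1$ and $n\ge 0$ let $$D_n(m)=\sum_{k=0}^{n}\binom{n-k}{k}^{m},$$ where $\binom{a}{b}=0$ whenever $b>a$. Let $(F_j)_{j\ge0}$ be the Fibonacci numbers ($F_0=0$, $F_1=1$, $F_j=F_{j-1}+F_{j-2}$) and $(L_j)_{j\ge0}$ the Lucas numbers ($L_0=2$, $L_1=1$, $L_j=L_{j-1}+L_{j-2}$). Then for every positive integer $m$, $$\lim_{n\to\infty}\frac{D_{n+1}(m)}{D_n(m)}=\frac{F_m\sqrt5+L_m}{2}.$$
   Context: $D_n(m)$ is the number of $m$-tuples of tilings of a $2\times n$ strip by dominoes in which all tilings have the same number of vertical dominoes; equivalently, the number of $m$-tuples of compositions of $n$ with parts in $\{1,2\}$ all having the same number of parts. *)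

theory Defs
  imports Complex_Main
begin

definition D :: "nat \<Rightarrow> nat \<Rightarrow> nat" where
  "D n m = (\<Sum>k = 0..n. ((n - k) choose k) ^ m)"

fun fibo :: "nat \<Rightarrow> nat" where
  "fibo 0 = 0"
| "fibo (Suc 0) = 1"
| "fibo (Suc (Suc j)) = fibo (Suc j) + fibo j"

fun lucas :: "nat \<Rightarrow> nat" where
  "lucas 0 = 2"
| "lucas (Suc 0) = 1"
| "lucas (Suc (Suc j)) = lucas (Suc j) + lucas j"

end

theory Submission
  imports Defs
begin

text \<open>With \<open>t(n,k) = C(n-k,k)\<close> we have \<open>D(n,m) = \<Sum>\<^sub>k t(n,k)\<^sup>m\<close>. For \<open>k \<approx> xn\<close>
  consecutive terms have ratio \<open>t(n,k+1)/t(n,k) \<approx> (1-2x)\<^sup>2/(x(1-x))\<close>, so row \<open>n\<close> grows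
  geometrically up to \<open>alpha n\<close> and decays geometrically after it, where \<open>alpha = (5 - \<surd>5)/10\<close>
  solves \<open>(1-2x)\<^sup>2 = x(1-x)\<close>; thus all but a vanishing fraction of \<open>D(n,m)\<close> comes from \<open>k\<close>
  near \<open>alpha n\<close>. There \<open>t(n+1,k)/t(n,k) = (n+1-k)/(n+1-2k) \<approx> (1-alpha)/(1-2alpha) = (1+\<surd>5)/2\<close>,
  so \<open>D(n+1,m)/D(n,m)\<close> tends to \<open>((1+\<surd>5)/2)\<^sup>m = (F\<^sub>m\<surd>5 + L\<^sub>m)/2\<close>.\<close>

lemma ex_less_one_minus_mult:
  fixes x y :: real
  assumes "x < y" "0 < y"
  shows "\<exists>e. 0 < e \<and> e < 1 \<and> x < (1 - e) * y"
proof (intro exI conjI)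
  define e where "e = min (1/2) ((y - x) / (2 * y))"
  show "0 < e" "e < 1" using assms by (auto simp: e_def)
  have "e * y \<le> (y - x) / (2 * y) * y" using assms by (intro mult_right_mono) (auto simp: e_def)
  also have "\<dots> = (y - x) / 2" using assms by simp
  finally show "x < (1 - e) * y" using assms by (simp add: algebra_simps)
qed

lemma ex_gt_one_mult_less:
  fixes x y :: real
  assumes "x < y" "0 < y"
  shows "\<exists>c > 1. c * x < y"
proof -
  obtain e where e: "0 < e" "e < 1" "x < (1 - e) * y"
    using ex_less_one_minus_mult[OF assms] by blast
  show ?thesis
  proof (intro exI conjI)
    show "1 < 1 / (1 - e)" using e by simp
    show "1 / (1 - e) * x < y" using e by (simp add: field_simps)
  qed
qed

lemma geometric_growth:
  fixes u :: "nat \<Rightarrow> real"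
  assumes growth: "\<And>j. real j \<le> B \<Longrightarrow> c * u j \<le> u (Suc j)" and c: "0 \<le> c"
  shows "real (k + i) \<le> B \<Longrightarrow> c ^ i * u k \<le> u (k + i)"
proof (induction i)
  case (Suc i)
  then have "c ^ i * u k \<le> u (k + i)" by simp
  then have "c * (c ^ i * u k) \<le> c * u (k + i)" using c by (rule mult_left_mono)
  also have "\<dots> \<le> u (Suc (k + i))" using growth Suc.prems by simp
  finally show ?case by (simp add: mult.assoc)
qed simp

lemma geometric_decay:
  fixes u :: "nat \<Rightarrow> real"
  assumes decay: "\<And>j. B \<le> real j \<Longrightarrow> c * u (Suc j) \<le> u j" and c: "0 \<le> c"
  shows "B \<le> real k \<Longrightarrow> c ^ i * u (k + i) \<le> u k"
proof (induction i)
  case (Suc i)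
  have "c ^ Suc i * u (k + Suc i) = c ^ i * (c * u (Suc (k + i)))" by (simp add: algebra_simps)
  also have "\<dots> \<le> c ^ i * u (k + i)" using decay[of "k + i"] Suc.prems c by (intro mult_left_mono) auto
  also have "\<dots> \<le> u k" using Suc by simp
  finally show ?case .
qed simp

lemma sum_le_mult_sum_image:
  fixes u :: "nat \<Rightarrow> real"
  assumes "inj_on h S" "h ` S \<subseteq> A" "finite A" "0 \<le> r"
    and "\<And>k. k \<in> S \<Longrightarrow> u k \<le> r * u (h k)" and "\<And>k. k \<in> A \<Longrightarrow> 0 \<le> u k"
  shows "sum u S \<le> r * sum u A"
proof -
  have "sum u S \<le> (\<Sum>k\<in>S. r * u (h k))" using assms(5) by (rule sum_mono)
  also have "\<dots> = r * sum u (h ` S)" by (simp add: sum_distrib_left sum.reindex[OF assms(1)])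
  also have "\<dots> \<le> r * sum u A"
    using assms by (intro mult_left_mono sum_mono2) auto
  finally show ?thesis .
qed

lemma sum_below_le_geometric:
  fixes u :: "nat \<Rightarrow> real"
  assumes growth: "\<And>j. real j \<le> B \<Longrightarrow> c * u j \<le> u (Suc j)"
    and c: "0 < c" and nonneg: "\<And>k. 0 \<le> u k" and B: "B \<le> real n"
  shows "(\<Sum>k\<in>{k\<in>{0..n}. real (k + L) \<le> B}. u k) \<le> (1 / c) ^ L * (\<Sum>k = 0..n. u k)"
proof (rule sum_le_mult_sum_image)
  show "inj_on (\<lambda>k. k + L) {k\<in>{0..n}. real (k + L) \<le> B}" by (simp add: inj_on_def)
  show "(\<lambda>k. k + L) ` {k\<in>{0..n}. real (k + L) \<le> B} \<subseteq> {0..n}" using B by auto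
  fix k assume "k \<in> {k\<in>{0..n}. real (k + L) \<le> B}"
  then have "c ^ L * u k \<le> u (k + L)" using geometric_growth[of B c u, OF growth] c by simp
  then show "u k \<le> (1 / c) ^ L * u (k + L)" using c by (simp add: field_simps)
qed (use c nonneg in auto)

lemma sum_above_le_geometric:
  fixes u :: "nat \<Rightarrow> real"
  assumes decay: "\<And>j. B \<le> real j \<Longrightarrow> c * u (Suc j) \<le> u j"
    and c: "0 < c" and nonneg: "\<And>k. 0 \<le> u k" and B: "0 \<le> B"
  shows "(\<Sum>k\<in>{k\<in>{0..n}. B + real L \<le> real k}. u k) \<le> (1 / c) ^ L * (\<Sum>k = 0..n. u k)"
proof (rule sum_le_mult_sum_image)
  show "inj_on (\<lambda>k. k - L) {k\<in>{0..n}. B + real L \<le> real k}"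
    using B by (auto simp: inj_on_def)
  show "(\<lambda>k. k - L) ` {k\<in>{0..n}. B + real L \<le> real k} \<subseteq> {0..n}" by auto
  fix k assume k: "k \<in> {k\<in>{0..n}. B + real L \<le> real k}"
  then have "L \<le> k" "B \<le> real (k - L)" using B by auto
  then have "c ^ L * u k \<le> u (k - L)" using geometric_decay[of B c u, OF decay, of "k - L" L] c by simp
  then show "u k \<le> (1 / c) ^ L * u (k - L)" using c by (simp add: field_simps)
qed (use c nonneg in auto)

definition diag_choose :: "nat \<Rightarrow> nat \<Rightarrow> real" where
  "diag_choose n k = real ((n - k) choose k)"

lemma real_D: "real (D n m) = (\<Sum>k = 0..n. diag_choose n k ^ m)"
  by (simp add: D_def diag_choose_def)

lemma D_pos: "0 < D n m"
proof -
  have "((n - 0) choose 0) ^ m \<le> D n m"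
    unfolding D_def by (rule member_le_sum) auto
  then show ?thesis by simp
qed

lemma diag_choose_nonneg: "0 \<le> diag_choose n k"
  by (simp add: diag_choose_def)

lemma diag_choose_eq_0: "n < 2 * k \<Longrightarrow> diag_choose n k = 0"
  by (simp add: diag_choose_def)

lemma diag_choose_Suc_row:
  assumes "2 * k \<le> Suc n"
  shows "diag_choose (Suc n) k * (real n + 1 - 2 * real k) = diag_choose n k * (real n + 1 - real k)"
proof -
  define a where "a = n - k"
  have shift: "Suc n - k = Suc a" "n - k = a" "k \<le> Suc a" "real n = real a + real k"
    using assms by (auto simp: a_def)
  have "(Suc a - k) * (Suc a choose k) = Suc a * (a choose k)"
    using binomial_absorb_comp[of "Suc a" k] by simp
  then have "(real a + 1 - real k) * real (Suc a choose k) = (real a + 1) * real (a choose k)"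
    using shift(3) by (metis of_nat_Suc of_nat_diff of_nat_mult add.commute)
  then show ?thesis
    unfolding diag_choose_def shift by (simp add: algebra_simps)
qed

lemma diag_choose_Suc_col:
  assumes "2 * j + 2 \<le> n"
  shows "diag_choose n (Suc j) * ((real j + 1) * (real n - real j))
       = diag_choose n j * ((real n - 2 * real j) * (real n - 2 * real j - 1))"
proof -
  define a where "a = n - Suc j"
  have shift: "n - j = Suc a" "n - Suc j = a" "real n = real a + real j + 1" "j \<le> a"
    using assms by (auto simp: a_def)
  have "Suc j * (a choose Suc j) = (a - j) * (a choose j)"
    using binomial_absorption[of j a] binomial_absorb_comp[of a j] by simp
  then have h1: "(real j + 1) * real (a choose Suc j) = (real a - real j) * real (a choose j)"
    using shift(4) by (metis of_nat_Suc of_nat_diff of_nat_mult add.commute)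
  have "(Suc a - j) * (Suc a choose j) = Suc a * (a choose j)"
    using binomial_absorb_comp[of "Suc a" j] by simp
  then have h2: "(real a + 1 - real j) * real (Suc a choose j) = (real a + 1) * real (a choose j)"
    using shift(4) by (metis of_nat_Suc of_nat_diff of_nat_mult add.commute le_SucI)
  have "real (a choose Suc j) * ((real j + 1) * (real a + 1))
      = (real a - real j) * ((real a + 1) * real (a choose j))"
    using arg_cong[OF h1, of "\<lambda>x. x * (real a + 1)"] by (simp add: algebra_simps)
  also have "\<dots> = real (Suc a choose j) * ((real a + 1 - real j) * (real a - real j))"
    using arg_cong[OF h2, of "\<lambda>x. x * (real a - real j)"] by (simp add: algebra_simps)
  finally show ?thesis
    unfolding diag_choose_def shift by (simp add: algebra_simps)
qed

lemma diag_choose_Suc_col_ge: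
  assumes "2 * j + 2 \<le> n"
    and "c * ((real j + 1) * (real n - real j)) \<le> (real n - 2 * real j) * (real n - 2 * real j - 1)"
  shows "c * diag_choose n j \<le> diag_choose n (Suc j)"
proof -
  have pos: "0 < (real j + 1) * (real n - real j)" using assms(1) by simp
  have "(c * diag_choose n j) * ((real j + 1) * (real n - real j))
      \<le> diag_choose n j * ((real n - 2 * real j) * (real n - 2 * real j - 1))"
    using mult_left_mono[OF assms(2) diag_choose_nonneg] by (simp add: algebra_simps)
  also have "\<dots> = diag_choose n (Suc j) * ((real j + 1) * (real n - real j))"
    using diag_choose_Suc_col[OF assms(1)] by simp
  finally show ?thesis using pos by (simp add: mult_le_cancel_right_pos)
qed

lemma diag_choose_Suc_col_le:
  assumes "2 * j + 2 \<le> n"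
    and "c * ((real n - 2 * real j) * (real n - 2 * real j - 1)) \<le> (real j + 1) * (real n - real j)"
  shows "c * diag_choose n (Suc j) \<le> diag_choose n j"
proof -
  have pos: "0 < (real j + 1) * (real n - real j)" using assms(1) by simp
  have "(c * diag_choose n (Suc j)) * ((real j + 1) * (real n - real j))
      = diag_choose n j * (c * ((real n - 2 * real j) * (real n - 2 * real j - 1)))"
    using arg_cong[OF diag_choose_Suc_col[OF assms(1)], of "\<lambda>x. c * x"] by (simp add: algebra_simps)
  also have "\<dots> \<le> diag_choose n j * ((real j + 1) * (real n - real j))"
    using mult_left_mono[OF assms(2) diag_choose_nonneg] .
  finally show ?thesis using pos by (simp add: mult_le_cancel_right_pos)
qed

definition alpha :: real where
  "alpha = (5 - sqrt 5) / 10"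

lemma alpha_bounds: "0 < alpha" "alpha < 1/2"
proof -
  have "2 < sqrt 5" "sqrt 5 < 5" by (auto intro!: real_less_rsqrt real_less_lsqrt)
  then show "0 < alpha" "alpha < 1/2" by (auto simp: alpha_def)
qed

lemma sq_minus_prod_eq: "(1 - 2 * x)^2 - x * (1 - x) = 5 * ((x - alpha) * (x - (1 - alpha)))"
proof -
  have "alpha * (1 - alpha) = 1/5"
    by (simp add: alpha_def field_simps power2_eq_square[symmetric])
  then show ?thesis by (simp add: algebra_simps power2_eq_square)
qed

lemma prod_less_sq_below_alpha: "x < alpha \<Longrightarrow> x * (1 - x) < (1 - 2 * x)^2"
  using sq_minus_prod_eq[of x] alpha_bounds mult_neg_neg[of "x - alpha" "x - (1 - alpha)"]
  by linarith

lemma sq_less_prod_above_alpha: "alpha < x \<Longrightarrow> x < 1 - alpha \<Longrightarrow> (1 - 2 * x)^2 < x * (1 - x)"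
  using sq_minus_prod_eq[of x] mult_pos_neg[of "x - alpha" "x - (1 - alpha)"]
  by linarith

lemma growth_factor_ge_below:
  fixes b c N x :: real
  assumes b: "b < 1/2" and c: "0 < c"
    and N: "0 < N" "1 + c \<le> N * ((1 - 2 * b)^2 - c * (b * (1 - b)))"
    and x: "0 \<le> x" "x \<le> b * N"
  shows "c * ((x + 1) * (N - x)) \<le> (N - 2 * x) * (N - 2 * x - 1)" and "2 * x + 1 < N"
proof -
  define Q where "Q = (1 - 2 * b)^2 - c * (b * (1 - b))"
  have "b * N \<le> N / 2" using b N by simp
  then have x': "x \<le> N / 2" "x + b * N - N \<le> 0" using x by auto
  have "(N - 2 * x)^2 - c * x * (N - x) - N^2 * Q = (4 + c) * ((x - b * N) * (x + b * N - N))"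
    by (simp add: Q_def power2_eq_square algebra_simps)
  moreover have "0 \<le> (4 + c) * ((x - b * N) * (x + b * N - N))"
    using c x x' by (intro mult_nonneg_nonneg mult_nonpos_nonpos) auto
  moreover have "(1 + c) * N \<le> N^2 * Q"
    using mult_left_mono[OF N(2), of N] N by (simp add: Q_def power2_eq_square algebra_simps)
  moreover have "c * (N - x) \<le> c * N" using c x by simp
  moreover have "(N - 2 * x) * (N - 2 * x - 1) - c * ((x + 1) * (N - x))
      = ((N - 2 * x)^2 - c * x * (N - x)) - ((N - 2 * x) + c * (N - x))"
    "(1 + c) * N = N + c * N"
    by (simp_all add: power2_eq_square algebra_simps)
  ultimately show key: "c * ((x + 1) * (N - x)) \<le> (N - 2 * x) * (N - 2 * x - 1)"
    using x by linarith
  have "0 < c * ((x + 1) * (N - x))" using c x x' N by simp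
  with key have "0 < (N - 2 * x) * (N - 2 * x - 1)" by linarith
  moreover have "N - 2 * x - 1 \<le> 0 \<Longrightarrow> (N - 2 * x) * (N - 2 * x - 1) \<le> 0"
    using x' by (intro mult_nonneg_nonpos) auto
  ultimately show "2 * x + 1 < N" by linarith
qed

lemma growth_factor_le_above:
  fixes b c N x :: real
  assumes b: "0 < b" "b < 1/2" and c: "0 \<le> c" and bc: "c * (1 - 2 * b)^2 \<le> b * (1 - b)"
    and N: "0 \<le> N" and x: "b * N \<le> x" "x \<le> N / 2"
  shows "c * ((N - 2 * x) * (N - 2 * x - 1)) \<le> (x + 1) * (N - x)"
proof -
  have "b * N \<le> 1/2 * N" using b N by (intro mult_right_mono) auto
  moreover have "0 \<le> b * N" using b N by simp
  ultimately have x': "0 \<le> x" "x + b * N - N \<le> 0" using x by auto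
  have "c * ((N - 2 * x) * (N - 2 * x)) - x * (N - x) - N^2 * (c * (1 - 2 * b)^2 - b * (1 - b))
      = (4 * c + 1) * ((x - b * N) * (x + b * N - N))"
    by (simp add: power2_eq_square algebra_simps)
  moreover have "(4 * c + 1) * ((x - b * N) * (x + b * N - N)) \<le> 0"
    using c x x' by (intro mult_nonneg_nonpos mult_nonneg_nonpos) auto
  moreover have "N^2 * (c * (1 - 2 * b)^2 - b * (1 - b)) \<le> 0"
    using bc by (intro mult_nonneg_nonpos) auto
  moreover have "c * ((N - 2 * x) * (N - 2 * x - 1)) \<le> c * ((N - 2 * x) * (N - 2 * x))"
    using c x by (intro mult_left_mono) auto
  moreover have "x * (N - x) \<le> (x + 1) * (N - x)" using x x' by (intro mult_right_mono) auto
  ultimately show ?thesis by linarith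
qed

lemma diag_choose_increasing_below:
  fixes b c :: real
  assumes b: "b < 1/2" and c: "0 < c" and bc: "c * (b * (1 - b)) < (1 - 2 * b)^2"
  shows "\<forall>\<^sub>F n in sequentially.
    \<forall>j. real j \<le> b * real n \<longrightarrow> c * diag_choose n j \<le> diag_choose n (Suc j)"
proof -
  define Q where "Q = (1 - 2 * b)^2 - c * (b * (1 - b))"
  have Q: "0 < Q" using bc by (simp add: Q_def)
  have "\<forall>\<^sub>F n in sequentially. (1 + c) / Q \<le> real n"
    using filterlim_real_sequentially by (simp add: filterlim_at_top)
  then show ?thesis
  proof (rule eventually_mono, intro allI impI)
    fix n j
    assume n: "(1 + c) / Q \<le> real n" and j: "real j \<le> b * real n"
    have "0 < (1 + c) / Q" using c Q by simp
    then have N: "0 < real n" "1 + c \<le> real n * Q"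
      using n Q by (linarith, simp add: pos_divide_le_eq)
    note factor = growth_factor_ge_below[OF b c N[unfolded Q_def] _ j]
    have "2 * j + 2 \<le> n" using factor(2) by simp
    then show "c * diag_choose n j \<le> diag_choose n (Suc j)"
      using factor(1) by (intro diag_choose_Suc_col_ge) auto
  qed
qed

lemma diag_choose_decreasing_above:
  fixes b c :: real
  assumes b: "0 < b" "b < 1/2" and c: "0 \<le> c" and bc: "c * (1 - 2 * b)^2 \<le> b * (1 - b)"
    and j: "b * real n \<le> real j"
  shows "c * diag_choose n (Suc j) \<le> diag_choose n j"
proof (cases "2 * j + 2 \<le> n")
  case False
  then show ?thesis using diag_choose_nonneg by (simp add: diag_choose_eq_0)
next
  case True
  then show ?thesis
    using growth_factor_le_above[OF b c bc _ j] by (intro diag_choose_Suc_col_le) auto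
qed

lemma diag_choose_power_mass_below:
  assumes beta: "beta < alpha" and e: "0 < e" and m: "1 \<le> m"
  shows "\<forall>\<^sub>F n in sequentially.
    (\<Sum>k\<in>{k\<in>{0..n}. real k < beta * (real n + 1)}. diag_choose n k ^ m) \<le> e * real (D n m)"
proof -
  define b where "b = (beta + alpha) / 2"
  have b: "beta < b" "b < alpha" "b < 1/2" using beta alpha_bounds by (auto simp: b_def)
  obtain c where c: "1 < c" "c * (b * (1 - b)) < (1 - 2 * b)^2"
    using ex_gt_one_mult_less[OF prod_less_sq_below_alpha[OF b(2)]] b(3) by auto
  have "1 < c ^ m" using c m by simp
  then obtain L where L: "(1 / c ^ m) ^ L < e" using real_arch_pow_inv[OF e, of "1 / c ^ m"] by auto
  have "\<forall>\<^sub>F n in sequentially.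
    \<forall>j. real j \<le> b * real n \<longrightarrow> c * diag_choose n j \<le> diag_choose n (Suc j)"
    using diag_choose_increasing_below[OF b(3) _ c(2)] c(1) by simp
  moreover have "\<forall>\<^sub>F n in sequentially. (beta + real L) / (b - beta) \<le> real n"
    using filterlim_real_sequentially by (simp add: filterlim_at_top)
  ultimately show ?thesis
  proof eventually_elim
    case (elim n)
    define S where "S = {k\<in>{0..n}. real (k + L) \<le> b * real n}"
    have growth: "c ^ m * diag_choose n j ^ m \<le> diag_choose n (Suc j) ^ m"
      if "real j \<le> b * real n" for j
    proof -
      have "(c * diag_choose n j) ^ m \<le> diag_choose n (Suc j) ^ m"
        using elim(1) that c(1) by (intro power_mono) (auto simp: diag_choose_nonneg)
      then show ?thesis by (simp add: power_mult_distrib)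
    qed
    have "beta + real L \<le> real n * (b - beta)" using elim b by (simp add: pos_divide_le_eq)
    then have "{k\<in>{0..n}. real k < beta * (real n + 1)} \<subseteq> S" by (auto simp: S_def algebra_simps)
    then have "(\<Sum>k\<in>{k\<in>{0..n}. real k < beta * (real n + 1)}. diag_choose n k ^ m)
        \<le> (\<Sum>k\<in>S. diag_choose n k ^ m)"
      by (intro sum_mono2) (auto simp: S_def diag_choose_nonneg)
    also have "\<dots> \<le> (1 / c ^ m) ^ L * real (D n m)"
    proof (unfold S_def real_D,
        rule sum_below_le_geometric[of "b * real n" "c ^ m" "\<lambda>k. diag_choose n k ^ m", OF growth])
      show "b * real n \<le> real n" using mult_right_mono[of b 1 "real n"] b by simp
    qed (use c in \<open>auto simp: diag_choose_nonneg\<close>)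
    also have "\<dots> \<le> e * real (D n m)" using L by (intro mult_right_mono) auto
    finally show ?case .
  qed
qed

lemma diag_choose_power_mass_above:
  assumes gam: "alpha < gam" "gam < 1/2" and e: "0 < e" and m: "1 \<le> m"
  shows "\<forall>\<^sub>F n in sequentially.
    (\<Sum>k\<in>{k\<in>{0..n}. gam * real n < real k}. diag_choose n k ^ m) \<le> e * real (D n m)"
proof -
  define b where "b = (alpha + gam) / 2"
  have b: "alpha < b" "b < gam" "0 < b" "b < 1/2" using gam alpha_bounds by (auto simp: b_def)
  have "b < 1 - alpha" using b alpha_bounds by simp
  then obtain c where c: "1 < c" "c * (1 - 2 * b)^2 < b * (1 - b)"
    using ex_gt_one_mult_less[OF sq_less_prod_above_alpha[OF b(1)]] b by auto
  have decay: "c ^ m * diag_choose n (Suc j) ^ m \<le> diag_choose n j ^ m" if "b * real n \<le> real j" for n j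
  proof -
    have "(c * diag_choose n (Suc j)) ^ m \<le> diag_choose n j ^ m"
      using diag_choose_decreasing_above[OF b(3,4) _ less_imp_le[OF c(2)] that] c(1)
      by (intro power_mono) (auto simp: diag_choose_nonneg)
    then show ?thesis by (simp add: power_mult_distrib)
  qed
  have "1 < c ^ m" using c m by simp
  then obtain L where L: "(1 / c ^ m) ^ L < e" using real_arch_pow_inv[OF e, of "1 / c ^ m"] by auto
  have "\<forall>\<^sub>F n in sequentially. real L / (gam - b) \<le> real n"
    using filterlim_real_sequentially by (simp add: filterlim_at_top)
  then show ?thesis
  proof (rule eventually_mono)
    fix n assume "real L / (gam - b) \<le> real n"
    then have "real L \<le> real n * (gam - b)" using b by (simp add: pos_divide_le_eq)
    then have "{k\<in>{0..n}. gam * real n < real k} \<subseteq> {k\<in>{0..n}. b * real n + real L \<le> real k}"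
      by (auto simp: algebra_simps)
    then have "(\<Sum>k\<in>{k\<in>{0..n}. gam * real n < real k}. diag_choose n k ^ m)
        \<le> (\<Sum>k\<in>{k\<in>{0..n}. b * real n + real L \<le> real k}. diag_choose n k ^ m)"
      by (intro sum_mono2) (auto simp: diag_choose_nonneg)
    also have "\<dots> \<le> (1 / c ^ m) ^ L * real (D n m)"
      unfolding real_D using b c
      by (intro sum_above_le_geometric[of "b * real n" "c ^ m" "\<lambda>k. diag_choose n k ^ m", OF decay])
        (auto simp: diag_choose_nonneg)
    also have "\<dots> \<le> e * real (D n m)" using L by (intro mult_right_mono) auto
    finally show "(\<Sum>k\<in>{k\<in>{0..n}. gam * real n < real k}. diag_choose n k ^ m)
      \<le> e * real (D n m)" .
  qed
qed

text \<open>For \<open>2k \<le> n\<close>: \<open>diag_choose (Suc n) k / diag_choose n k = row_ratio (k / (n + 1))\<close>.\<close>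

definition row_ratio :: "real \<Rightarrow> real" where
  "row_ratio x = (1 - x) / (1 - 2 * x)"

lemma row_ratio_pos: "x < 1/2 \<Longrightarrow> 0 < row_ratio x"
  by (simp add: row_ratio_def)

lemma diag_choose_Suc_row_le:
  assumes g: "gam < 1/2" and k: "real k \<le> gam * (real n + 1)"
  shows "diag_choose (Suc n) k \<le> row_ratio gam * diag_choose n k"
proof -
  define N where "N = real n + 1"
  have "gam * N < N / 2" using mult_strict_right_mono[OF g, of N] by (simp add: N_def)
  moreover have "real k \<le> gam * N" using k by (simp add: N_def)
  ultimately have "0 < N - 2 * real k" by linarith
  then have pos: "0 < (N - 2 * real k) * (1 - 2 * gam)" and "2 * k \<le> Suc n"
    using g by (auto simp: N_def)
  have "diag_choose (Suc n) k * ((N - 2 * real k) * (1 - 2 * gam))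
      = diag_choose n k * ((N - real k) * (1 - 2 * gam))"
    using arg_cong[OF diag_choose_Suc_row[OF \<open>2 * k \<le> Suc n\<close>], of "\<lambda>x. x * (1 - 2 * gam)"]
    by (simp add: N_def algebra_simps)
  also have "\<dots> \<le> diag_choose n k * ((1 - gam) * (N - 2 * real k))"
    using k by (intro mult_left_mono diag_choose_nonneg) (simp add: N_def algebra_simps)
  also have "\<dots> = (row_ratio gam * diag_choose n k) * ((N - 2 * real k) * (1 - 2 * gam))"
    using g by (simp add: row_ratio_def field_simps)
  finally show ?thesis using pos by (simp add: mult_le_cancel_right_pos)
qed

lemma diag_choose_Suc_row_ge:
  assumes b: "beta < 1/2" and k: "beta * (real n + 1) \<le> real k"
  shows "row_ratio beta * diag_choose n k \<le> diag_choose (Suc n) k"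
proof (cases "2 * k \<le> n")
  case False
  then show ?thesis using diag_choose_nonneg by (simp add: diag_choose_eq_0)
next
  case True
  define N where "N = real n + 1"
  have pos: "0 < (N - 2 * real k) * (1 - 2 * beta)" using True b by (simp add: N_def)
  have "(row_ratio beta * diag_choose n k) * ((N - 2 * real k) * (1 - 2 * beta))
      = diag_choose n k * ((1 - beta) * (N - 2 * real k))"
    using b by (simp add: row_ratio_def field_simps)
  also have "\<dots> \<le> diag_choose n k * ((N - real k) * (1 - 2 * beta))"
    using k by (intro mult_left_mono diag_choose_nonneg) (simp add: N_def algebra_simps)
  also have "\<dots> = diag_choose (Suc n) k * ((N - 2 * real k) * (1 - 2 * beta))"
    using arg_cong[OF diag_choose_Suc_row[of k n], of "\<lambda>x. x * (1 - 2 * beta)"] True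
    by (simp add: N_def algebra_simps)
  finally show ?thesis using pos by (simp add: mult_le_cancel_right_pos)
qed

lemma D_Suc_lower_bound:
  assumes beta: "beta < 1/2"
    and mass: "(\<Sum>k\<in>{k\<in>{0..n}. real k < beta * (real n + 1)}. diag_choose n k ^ m)
      \<le> e * real (D n m)"
  shows "(1 - e) * row_ratio beta ^ m * real (D n m) \<le> real (D (Suc n) m)"
proof -
  define S where "S = {k\<in>{0..n}. real k < beta * (real n + 1)}"
  have "(\<Sum>k\<in>{0..n} - S. diag_choose n k ^ m) = real (D n m) - (\<Sum>k\<in>S. diag_choose n k ^ m)"
    unfolding real_D by (rule sum_diff) (auto simp: S_def)
  then have "(1 - e) * real (D n m) \<le> (\<Sum>k\<in>{0..n} - S. diag_choose n k ^ m)"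
    using mass by (simp add: S_def algebra_simps)
  then have "(1 - e) * row_ratio beta ^ m * real (D n m)
      \<le> row_ratio beta ^ m * (\<Sum>k\<in>{0..n} - S. diag_choose n k ^ m)"
    using row_ratio_pos[OF beta] by (simp add: mult.left_commute mult_left_mono)
  also have "\<dots> = (\<Sum>k\<in>{0..n} - S. (row_ratio beta * diag_choose n k) ^ m)"
    by (simp add: power_mult_distrib sum_distrib_left)
  also have "\<dots> \<le> (\<Sum>k\<in>{0..n} - S. diag_choose (Suc n) k ^ m)"
    using row_ratio_pos[OF beta] diag_choose_Suc_row_ge[OF beta]
    by (intro sum_mono power_mono) (auto simp: S_def diag_choose_nonneg)
  also have "\<dots> \<le> real (D (Suc n) m)"
    unfolding real_D by (intro sum_mono2) (auto simp: diag_choose_nonneg)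
  finally show ?thesis .
qed

lemma D_Suc_upper_bound:
  assumes gam: "gam < 1/2"
    and mass: "(\<Sum>k\<in>{k\<in>{0..Suc n}. gam * real (Suc n) < real k}. diag_choose (Suc n) k ^ m)
      \<le> e * real (D (Suc n) m)"
  shows "(1 - e) * real (D (Suc n) m) \<le> row_ratio gam ^ m * real (D n m)"
proof -
  define T where "T = {0..Suc n} - {k\<in>{0..Suc n}. gam * real (Suc n) < real k}"
  have T: "k \<le> n" "real k \<le> gam * (real n + 1)" if "k \<in> T" for k
  proof -
    show "real k \<le> gam * (real n + 1)" using that by (auto simp: T_def add.commute)
    moreover have "gam * (real n + 1) < real n + 1" using gam by (simp add: mult_less_cancel_right1)
    ultimately show "k \<le> n" by linarith
  qed
  have "(\<Sum>k\<in>T. diag_choose (Suc n) k ^ m) = real (D (Suc n) m)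
      - (\<Sum>k\<in>{k\<in>{0..Suc n}. gam * real (Suc n) < real k}. diag_choose (Suc n) k ^ m)"
    unfolding real_D T_def by (rule sum_diff) auto
  then have "(1 - e) * real (D (Suc n) m) \<le> (\<Sum>k\<in>T. diag_choose (Suc n) k ^ m)"
    using mass by (simp add: algebra_simps)
  also have "\<dots> \<le> (\<Sum>k\<in>T. (row_ratio gam * diag_choose n k) ^ m)"
    using diag_choose_Suc_row_le[OF gam] T
    by (intro sum_mono power_mono) (auto simp: diag_choose_nonneg)
  also have "\<dots> = row_ratio gam ^ m * (\<Sum>k\<in>T. diag_choose n k ^ m)"
    by (simp add: power_mult_distrib sum_distrib_left)
  also have "\<dots> \<le> row_ratio gam ^ m * real (D n m)"
    unfolding real_D using T row_ratio_pos[OF gam]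
    by (intro mult_left_mono sum_mono2) (auto simp: diag_choose_nonneg)
  finally show ?thesis .
qed

lemma D_ratio_eventually_gt:
  assumes a: "a < row_ratio alpha ^ m" and m: "1 \<le> m"
  shows "\<forall>\<^sub>F n in sequentially. a < real (D (Suc n) m) / real (D n m)"
proof -
  have "isCont (\<lambda>x. row_ratio x ^ m) alpha"
    unfolding row_ratio_def using alpha_bounds by (intro continuous_intros) auto
  then have "\<forall>\<^sub>F x in at_left alpha. a < row_ratio x ^ m"
    using a by (intro order_tendstoD(1)) (auto simp: isCont_def filterlim_at_split)
  then obtain b where "b < alpha" and b: "\<And>y. b < y \<Longrightarrow> y < alpha \<Longrightarrow> a < row_ratio y ^ m"
    by (auto simp: eventually_at_left_field)
  define beta where "beta = (b + alpha) / 2"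
  have beta: "beta < alpha" "beta < 1/2" "a < row_ratio beta ^ m"
    using \<open>b < alpha\<close> alpha_bounds b by (auto simp: beta_def)
  have "0 < row_ratio beta ^ m" using row_ratio_pos[OF beta(2)] by simp
  then obtain e where e: "0 < e" "a < (1 - e) * row_ratio beta ^ m"
    using ex_less_one_minus_mult[OF beta(3)] by auto
  show ?thesis
    using diag_choose_power_mass_below[OF beta(1) e(1) m]
  proof eventually_elim
    case (elim n)
    have "a * real (D n m) < (1 - e) * row_ratio beta ^ m * real (D n m)"
      using e D_pos[of n m] by (intro mult_strict_right_mono) auto
    also have "\<dots> \<le> real (D (Suc n) m)" using D_Suc_lower_bound[OF beta(2) elim] .
    finally show ?case using D_pos[of n m] by (simp add: pos_less_divide_eq)
  qed
qed

lemma D_ratio_eventually_lt: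
  assumes a: "row_ratio alpha ^ m < a" and m: "1 \<le> m"
  shows "\<forall>\<^sub>F n in sequentially. real (D (Suc n) m) / real (D n m) < a"
proof -
  have "isCont (\<lambda>x. row_ratio x ^ m) alpha"
    unfolding row_ratio_def using alpha_bounds by (intro continuous_intros) auto
  then have "\<forall>\<^sub>F x in at_right alpha. row_ratio x ^ m < a"
    using a by (intro order_tendstoD(2)) (auto simp: isCont_def filterlim_at_split)
  then obtain d where "alpha < d" and d: "\<And>y. alpha < y \<Longrightarrow> y < d \<Longrightarrow> row_ratio y ^ m < a"
    by (auto simp: eventually_at_right_field)
  define gam where "gam = min ((alpha + d) / 2) ((alpha + 1/2) / 2)"
  have gam: "alpha < gam" "gam < 1/2" "row_ratio gam ^ m < a"
    using \<open>alpha < d\<close> alpha_bounds d by (auto simp: gam_def min_def)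
  have "0 < row_ratio gam ^ m" using row_ratio_pos[OF gam(2)] by simp
  then obtain e where e: "0 < e" "e < 1" "row_ratio gam ^ m < (1 - e) * a"
    using ex_less_one_minus_mult[OF gam(3)] gam(3) by auto
  have "\<forall>\<^sub>F n in sequentially.
    (\<Sum>k\<in>{k\<in>{0..Suc n}. gam * real (Suc n) < real k}. diag_choose (Suc n) k ^ m)
      \<le> e * real (D (Suc n) m)"
    using diag_choose_power_mass_above[OF gam(1,2) e(1) m] by (rule eventually_sequentially_Suc[THEN iffD2])
  then show ?thesis
  proof eventually_elim
    case (elim n)
    have "(1 - e) * real (D (Suc n) m) \<le> row_ratio gam ^ m * real (D n m)"
      using D_Suc_upper_bound[OF gam(2) elim] .
    also have "\<dots> < (1 - e) * (a * real (D n m))"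
      using e D_pos[of n m] by (simp add: mult_strict_right_mono)
    finally show ?case using e(2) D_pos[of n m] by (simp add: pos_divide_less_eq)
  qed
qed

lemma golden_ratio_power:
  "((1 + sqrt 5) / 2) ^ j = (real (fibo j) * sqrt 5 + real (lucas j)) / 2"
proof (induction j rule: fibo.induct)
  case (3 j)
  define p :: real where "p = (1 + sqrt 5) / 2"
  have "p ^ Suc (Suc j) = p ^ j * (p * p)" by (simp add: algebra_simps)
  also have "p * p = p + 1" by (simp add: p_def field_simps)
  finally have "p ^ Suc (Suc j) = p ^ Suc j + p ^ j" by (simp add: algebra_simps)
  with 3 have "p ^ Suc (Suc j) = (real (fibo (Suc (Suc j))) * sqrt 5 + real (lucas (Suc (Suc j)))) / 2"
    unfolding p_def[symmetric] by (simp add: field_simps)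
  then show ?case by (simp only: p_def)
qed simp_all

lemma row_ratio_alpha: "row_ratio alpha = (1 + sqrt 5) / 2"
  by (simp add: row_ratio_def alpha_def field_simps)

theorem proposition1:
  fixes m :: nat
  assumes "m \<ge> 1"
  shows "(\<lambda>n. real (D (Suc n) m) / real (D n m))
           \<longlonglongrightarrow> (real (fibo m) * sqrt 5 + real (lucas m)) / 2"
proof -
  have "(real (fibo m) * sqrt 5 + real (lucas m)) / 2 = row_ratio alpha ^ m"
    by (simp add: row_ratio_alpha golden_ratio_power)
  then show ?thesis
    using D_ratio_eventually_gt[OF _ assms] D_ratio_eventually_lt[OF _ assms]
    by (auto intro: order_tendstoI)
qed

end
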